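(* For every institution $s$, the aggregate choice rule with transfers $\mathcal{C}^{hT}_s$ is fair: for every $Y\subseteq X$ and every $x\in Y_s$ with $\mathbf{i}(x)\notin\mathbf{i}(\mathcal{C}^{hT}_s(Y))$, every $y\in\mathcal{C}^{hT}_s(Y)$ satisfies at least one of: (1) $\mathbf{i}(y)\succ_s\mathbf{i}(x)$; (2) $\mathbf{t}(x)\neq\mathbf{t}(y)$; (3) $\rho(\mathbf{i}(y))\setminus\rho(\mathbf{i}(x))\neq\emptyset$.
   Context: Model. $I$ finite set of individuals, $S$ finite set of institutions. Reserve categories $R=\{SC,ST,OBC,EWS\}$, position types $V=\{o\}\cup R$ ($o$ = open). Institution $s$ has $q_s^r$ positions reserved for $r\in R$ and $q_s^o$ open positions. Individual $i$ has vertical membership $t(i)\in R\cup\{g\}$. Institution $s$ has a strict merit ranking $\succ_s$ of $I$. Contracts $X$: triples $(i,s,v)$ with $v=o$, or $v=t(i)$ if $t(i)\in R$; $\mathbf{i}(x),\mathbf{s}(x),\mathbf{t}(x)$ denote individual, institution, category; $Y_s$ the contracts in $Y$ with institution $s$, $\mathbf{i}(Y)=\{\mathbf{i}(x):x\in Y\}$. $H=\{h_1,\dots,h_L\}$ horizontal types, $\rho(i)\subseteq H$, $\rho^{-1}(h)=\{i:h\in\rho(i)\}$; hierarchical: if $\rho^{-1}(h)\cap\rho^{-1}(h')\neq\emptyset$ then one is a strict subset of the other ($h$ contains $h'$ if $\rho^{-1}(h')\subsetneq\rho^{-1}(h)$). Reservations $\kappa^s_v\in\mathbb{Z}_+^L$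 for each $s$, $v\in V$; chosen individuals count against all their types. Hierarchical choice rule $C^h(A,\kappa,\rho)$ with capacity $q$ and ranking $\succ$: Step 1: let $H^1$ be the types containing no other type. If no individual in $A$ has a type, choose the $\min(q,|A|)$ highest-ranked and stop. Otherwise, for each $h_j\in H^1$ (fixed order, not exceeding remaining positions), choose all not-yet-chosen type-$h_j$ individuals of $A$ if at most $\kappa_j$, else the $\kappa_j$ highest-ranked; reduce remaining positions and the reservation of every type containing $h_j$ by the number chosen (floored at 0); remove $h_j$. Step $n\ge2$: stop if nothing remains; if no type remains, fill remaining positions by rank and stop; otherwise process remaining types containing no other remaining type as in Step 1. Output: all chosen individuals. Aggregate rule with transfers $\mathcal{C}^{hT}_s$: process categories in order $o,SC,ST,OBC,EWS$; for category $v$, let $A_v$ be the individuals with a contract $(i,s,v)\in Y$ not chosen earlier, apply $C^h(A_v,\kappa^s_v,\rho)$ with capacity $q^v_s$ and ranking $\succ_s$, and select the contracts $(i,s,v)$ of the chosen. Then a final de-reserved category $D$ with capacity $q^D_s$ equal to the number of unfilled OBC positions ($q_s^{OBC}$ minus the number selected in category OBC) selects, among individuals not yet chosen who have an open-category contract $(i,s,o)\in Y$, the $\min(q^D_s,\cdot)$ highest-ranked according to $\succ_s$ (a responsive rule), and selects those contracts. $\mathcal{C}^{hT}_s(Y)$ is the union of all selected contracts. *)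

theory Defs
  imports Main
begin

text \<open>Reserve categories R = {SC, ST, OBC, EWS}; position types V = {o} plus R.
  Vertical membership t(i) is in R or g; we encode g as None.\<close>

datatype rcat = SC | ST | OBC | EWS
datatype ptype = Open | Res rcat

type_synonym ('i, 's) contract = "'i \<times> 's \<times> ptype"

definition indiv :: "('i, 's) contract \<Rightarrow> 'i" where
  "indiv x = fst x"
definition inst :: "('i, 's) contract \<Rightarrow> 's" where
  "inst x = fst (snd x)"
definition cat :: "('i, 's) contract \<Rightarrow> ptype" where
  "cat x = snd (snd x)"

definition contracts :: "('i \<Rightarrow> rcat option) \<Rightarrow> ('i, 's) contract set" where
  "contracts t = {(i, s, v). v = Open \<or> (\<exists>r. t i = Some r \<and> v = Res r)}"

text \<open>r a b means: a is ranked strictly higher than b.\<close>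
definition strict_ranking :: "('i \<Rightarrow> 'i \<Rightarrow> bool) \<Rightarrow> bool" where
  "strict_ranking r \<longleftrightarrow> (\<forall>a. \<not> r a a) \<and> (\<forall>a b c. r a b \<longrightarrow> r b c \<longrightarrow> r a c)
      \<and> (\<forall>a b. a \<noteq> b \<longrightarrow> r a b \<or> r b a)"

definition top_k :: "('i \<Rightarrow> 'i \<Rightarrow> bool) \<Rightarrow> nat \<Rightarrow> 'i set \<Rightarrow> 'i set" where
  "top_k r k B = {a \<in> B. card {b \<in> B. r b a} < k}"

definition members :: "('i \<Rightarrow> 'h set) \<Rightarrow> 'h \<Rightarrow> 'i set" where
  "members \<rho> h = {i. h \<in> \<rho> i}"

definition contains :: "('i \<Rightarrow> 'h set) \<Rightarrow> 'h \<Rightarrow> 'h \<Rightarrow> bool" where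
  "contains \<rho> h h' \<longleftrightarrow> members \<rho> h' \<subset> members \<rho> h"

text \<open>H is given as a list hs (its order is the fixed processing order).\<close>
definition hierarchical :: "'h list \<Rightarrow> ('i \<Rightarrow> 'h set) \<Rightarrow> bool" where
  "hierarchical hs \<rho> \<longleftrightarrow> distinct hs \<and> (\<forall>i. \<rho> i \<subseteq> set hs) \<and>
     (\<forall>h \<in> set hs. \<forall>h' \<in> set hs. h \<noteq> h' \<longrightarrow> members \<rho> h \<inter> members \<rho> h' \<noteq> {} \<longrightarrow>
         contains \<rho> h h' \<or> contains \<rho> h' h)"

text \<open>Processing one type h: state = (chosen, remaining positions, remaining reservations).\<close>
definition proc_type :: "('i \<Rightarrow> 'i \<Rightarrow> bool) \<Rightarrow> ('i \<Rightarrow> 'h set) \<Rightarrow> 'i set \<Rightarrow> 'h \<Rightarrow>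
    'i set \<times> nat \<times> ('h \<Rightarrow> nat) \<Rightarrow> 'i set \<times> nat \<times> ('h \<Rightarrow> nat)" where
  "proc_type r \<rho> A h st = (case st of (C, q, \<kappa>) \<Rightarrow>
     (let ch = top_k r (min (\<kappa> h) q) {a \<in> A. a \<notin> C \<and> h \<in> \<rho> a}
      in (C \<union> ch, q - card ch,
          \<lambda>h'. if contains \<rho> h' h then \<kappa> h' - card ch else \<kappa> h')))"

definition minimal_types :: "('i \<Rightarrow> 'h set) \<Rightarrow> 'h list \<Rightarrow> 'h list" where
  "minimal_types \<rho> R = filter (\<lambda>h. \<not> (\<exists>h' \<in> set R. contains \<rho> h h')) R"

text \<open>Steps of the rule; the first argument is a step budget (length hs + 1 suffices).\<close>
fun hsteps :: "('i \<Rightarrow> 'i \<Rightarrow> bool) \<Rightarrow> ('i \<Rightarrow> 'h set) \<Rightarrow> 'i set \<Rightarrow> nat \<Rightarrow>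
    'i set \<Rightarrow> nat \<Rightarrow> ('h \<Rightarrow> nat) \<Rightarrow> 'h list \<Rightarrow> 'i set" where
  "hsteps r \<rho> A 0 C q \<kappa> R = C"
| "hsteps r \<rho> A (Suc n) C q \<kappa> R =
     (if q = 0 then C
      else if R = [] then C \<union> top_k r q (A - C)
      else (let M = minimal_types \<rho> R;
                (C', q', \<kappa>') = fold (proc_type r \<rho> A) M (C, q, \<kappa>)
            in hsteps r \<rho> A n C' q' \<kappa>' (filter (\<lambda>h. h \<notin> set M) R)))"

definition choice_h :: "('i \<Rightarrow> 'i \<Rightarrow> bool) \<Rightarrow> 'h list \<Rightarrow> ('i \<Rightarrow> 'h set) \<Rightarrow> nat \<Rightarrow>
    ('h \<Rightarrow> nat) \<Rightarrow> 'i set \<Rightarrow> 'i set" where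
  "choice_h r hs \<rho> q \<kappa> A =
     (if \<forall>a \<in> A. \<rho> a = {} then top_k r q A
      else hsteps r \<rho> A (Suc (length hs)) {} q \<kappa> hs)"

definition cat_order :: "ptype list" where
  "cat_order = [Open, Res SC, Res ST, Res OBC, Res EWS]"

definition agg_step :: "('i \<Rightarrow> 'i \<Rightarrow> bool) \<Rightarrow> 'h list \<Rightarrow> ('i \<Rightarrow> 'h set) \<Rightarrow>
    (ptype \<Rightarrow> nat) \<Rightarrow> (ptype \<Rightarrow> 'h \<Rightarrow> nat) \<Rightarrow> 's \<Rightarrow> ('i, 's) contract set \<Rightarrow> ptype \<Rightarrow>
    'i set \<times> ('i, 's) contract set \<Rightarrow> 'i set \<times> ('i, 's) contract set" where
  "agg_step r hs \<rho> cap res s Y v st = (case st of (Ch, Z) \<Rightarrow>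
     (let Av = {i. (i, s, v) \<in> Y \<and> i \<notin> Ch};
          sel = choice_h r hs \<rho> (cap v) (res v) Av
      in (Ch \<union> sel, Z \<union> {(i, s, v) | i. i \<in> sel})))"

definition choice_hT :: "('s \<Rightarrow> 'i \<Rightarrow> 'i \<Rightarrow> bool) \<Rightarrow> 'h list \<Rightarrow> ('i \<Rightarrow> 'h set) \<Rightarrow>
    ('s \<Rightarrow> ptype \<Rightarrow> nat) \<Rightarrow> ('s \<Rightarrow> ptype \<Rightarrow> 'h \<Rightarrow> nat) \<Rightarrow> 's \<Rightarrow>
    ('i, 's) contract set \<Rightarrow> ('i, 's) contract set" where
  "choice_hT better hs \<rho> cap res s Y =
     (let (Ch, Z) = fold (agg_step (better s) hs \<rho> (cap s) (res s) s Y) cat_order ({}, {});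
          qD = cap s (Res OBC) - card {i. (i, s, Res OBC) \<in> Z};
          selD = top_k (better s) qD {i. (i, s, Open) \<in> Y \<and> i \<notin> Ch}
      in Z \<union> {(i, s, Open) | i. i \<in> selD})"

end

theory Submission
  imports Defs
begin

text \<open>Each stage of the rule admits an applicant only when it outranks every rejected
  applicant of the same pool whose types include all of its own: a step for type h draws
  from all remaining type-h applicants, and such a rival carries h too, while a step by rank
  alone draws from everybody. Later stages only shrink the set of rejected applicants, so
  the property survives to the end, and it is exactly the fairness condition.\<close>

definition no_justified_envy :: "('i \<Rightarrow> 'i \<Rightarrow> bool) \<Rightarrow> ('i \<Rightarrow> 'h set) \<Rightarrow> 'i set \<Rightarrow> 'i set \<Rightarrow> bool"
  where "no_justified_envy r \<rho> C D \<longleftrightarrow> (\<forall>j\<in>C. \<forall>i\<in>D. \<rho> j \<subseteq> \<rho> i \<longrightarrow> r j i)"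

lemma no_justified_envy_mono:
  "no_justified_envy r \<rho> C D \<Longrightarrow> C' \<subseteq> C \<Longrightarrow> D' \<subseteq> D \<Longrightarrow> no_justified_envy r \<rho> C' D'"
  unfolding no_justified_envy_def by blast

lemma top_k_subset: "top_k r k B \<subseteq> B"
  unfolding top_k_def by auto

lemma top_k_outranks:
  assumes r: "strict_ranking r" and "finite B"
    and a: "a \<in> top_k r k B" and b: "b \<in> B" "b \<notin> top_k r k B"
  shows "r a b"
proof (rule ccontr)
  assume "\<not> r a b"
  moreover have "a \<noteq> b" using a b by auto
  ultimately have "r b a" using r unfolding strict_ranking_def by blast
  then have sub: "insert b {c \<in> B. r c b} \<subseteq> {c \<in> B. r c a}"
    using r b unfolding strict_ranking_def by blast
  have "b \<notin> {c \<in> B. r c b}" using r unfolding strict_ranking_def by blast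
  then have "Suc (card {c \<in> B. r c b}) = card (insert b {c \<in> B. r c b})"
    using \<open>finite B\<close> by simp
  also have "\<dots> \<le> card {c \<in> B. r c a}"
    using sub \<open>finite B\<close> by (simp add: card_mono)
  also have "\<dots> < k" using a unfolding top_k_def by simp
  finally have "Suc (card {c \<in> B. r c b}) < k" .
  moreover have "k \<le> card {c \<in> B. r c b}" using b unfolding top_k_def by simp
  ultimately show False by simp
qed

lemma no_justified_envy_top_k:
  "strict_ranking r \<Longrightarrow> finite B \<Longrightarrow> no_justified_envy r \<rho> (top_k r k B) (B - top_k r k B)"
  unfolding no_justified_envy_def by (metis DiffE top_k_outranks)

definition fair_extension :: "('i \<Rightarrow> 'i \<Rightarrow> bool) \<Rightarrow> ('i \<Rightarrow> 'h set) \<Rightarrow> 'i set \<Rightarrow> 'i set \<Rightarrow> 'i set \<Rightarrow> bool"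
  where "fair_extension r \<rho> A C C' \<longleftrightarrow> C \<subseteq> C' \<and> no_justified_envy r \<rho> (C' - C) (A - C')"

lemma fair_extension_refl: "fair_extension r \<rho> A C C"
  unfolding fair_extension_def no_justified_envy_def by blast

lemma fair_extension_trans:
  "fair_extension r \<rho> A C C' \<Longrightarrow> fair_extension r \<rho> A C' C'' \<Longrightarrow> fair_extension r \<rho> A C C''"
  unfolding fair_extension_def no_justified_envy_def by blast

lemma fair_extension_proc_type:
  assumes r: "strict_ranking r" and "finite A"
  shows "fair_extension r \<rho> A (fst st) (fst (proc_type r \<rho> A h st))"
proof -
  obtain C q \<kappa> where st: "st = (C, q, \<kappa>)" by (cases st)
  define B where "B = {a \<in> A. a \<notin> C \<and> h \<in> \<rho> a}"
  define ch where "ch = top_k r (min (\<kappa> h) q) B"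
  have step: "fst (proc_type r \<rho> A h (C, q, \<kappa>)) = C \<union> ch"
    unfolding proc_type_def ch_def B_def by (simp add: Let_def)
  have "no_justified_envy r \<rho> ch (B - ch)"
    unfolding ch_def by (rule no_justified_envy_top_k[OF r]) (simp add: B_def \<open>finite A\<close>)
  moreover have "ch \<subseteq> B" unfolding ch_def by (rule top_k_subset)
  \<comment> \<open>a rival whose types include those of an admitted applicant has type h as well\<close>
  ultimately have "no_justified_envy r \<rho> ch (A - (C \<union> ch))"
    unfolding no_justified_envy_def B_def by blast
  then show ?thesis
    unfolding st fair_extension_def step by (auto intro: no_justified_envy_mono)
qed

lemma fair_extension_hsteps:
  assumes r: "strict_ranking r" and "finite A"
  shows "fair_extension r \<rho> A C (hsteps r \<rho> A n C q \<kappa> R)"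
proof (induction n arbitrary: C q \<kappa> R)
  case 0
  show ?case by (simp add: fair_extension_refl)
next
  case (Suc n)
  consider "q = 0" | "q \<noteq> 0" "R = []" | "q \<noteq> 0" "R \<noteq> []" by blast
  then show ?case
  proof cases
    case 1
    then show ?thesis by (simp add: fair_extension_refl)
  next
    case 2
    have "no_justified_envy r \<rho> (top_k r q (A - C)) ((A - C) - top_k r q (A - C))"
      by (rule no_justified_envy_top_k[OF r]) (simp add: \<open>finite A\<close>)
    with 2 show ?thesis
      unfolding fair_extension_def by (auto intro: no_justified_envy_mono)
  next
    case 3
    define M where "M = minimal_types \<rho> R"
    obtain C' q' \<kappa>' where fold: "fold (proc_type r \<rho> A) M (C, q, \<kappa>) = (C', q', \<kappa>')"
      by (cases "fold (proc_type r \<rho> A) M (C, q, \<kappa>)")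
    have "fair_extension r \<rho> A C (fst (fold (proc_type r \<rho> A) M (C, q, \<kappa>)))"
      by (rule fold_invariant[where Q = "\<lambda>_. True"])
        (auto intro: fair_extension_refl fair_extension_trans
          fair_extension_proc_type[OF r \<open>finite A\<close>])
    with fold have "fair_extension r \<rho> A C C'" by simp
    moreover have "hsteps r \<rho> A (Suc n) C q \<kappa> R
        = hsteps r \<rho> A n C' q' \<kappa>' (filter (\<lambda>h. h \<notin> set M) R)"
      using 3 fold by (simp add: M_def)
    ultimately show ?thesis using Suc.IH by (auto intro: fair_extension_trans)
  qed
qed

lemma no_justified_envy_choice_h:
  assumes r: "strict_ranking r" and "finite A"
  shows "no_justified_envy r \<rho> (choice_h r hs \<rho> q \<kappa> A) (A - choice_h r hs \<rho> q \<kappa> A)"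
proof (cases "\<forall>a \<in> A. \<rho> a = {}")
  case True
  then show ?thesis
    unfolding choice_h_def using no_justified_envy_top_k[OF r \<open>finite A\<close>] by simp
next
  case False
  then have "choice_h r hs \<rho> q \<kappa> A = hsteps r \<rho> A (Suc (length hs)) {} q \<kappa> hs"
    unfolding choice_h_def by (rule if_not_P)
  then show ?thesis
    using fair_extension_hsteps[OF r \<open>finite A\<close>, of \<rho> "{}"]
    unfolding fair_extension_def by (simp del: hsteps.simps)
qed

definition applicants :: "('i, 's) contract set \<Rightarrow> 's \<Rightarrow> ptype \<Rightarrow> 'i set \<Rightarrow> 'i set"
  where "applicants Y s v Ch = {i. (i, s, v) \<in> Y \<and> i \<notin> Ch}"

definition admit :: "'s \<Rightarrow> ptype \<Rightarrow> 'i set \<Rightarrow> 'i set \<times> ('i, 's) contract set \<Rightarrow>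
    'i set \<times> ('i, 's) contract set"
  where "admit s v S st = (case st of (Ch, Z) \<Rightarrow> (Ch \<union> S, Z \<union> {(i, s, v) | i. i \<in> S}))"

definition fair_state :: "('i \<Rightarrow> 'i \<Rightarrow> bool) \<Rightarrow> ('i \<Rightarrow> 'h set) \<Rightarrow> ('i, 's) contract set \<Rightarrow> 's \<Rightarrow>
    'i set \<times> ('i, 's) contract set \<Rightarrow> bool"
  where "fair_state r \<rho> Y s st \<longleftrightarrow> (case st of (Ch, Z) \<Rightarrow> Ch = indiv ` Z \<and>
           (\<forall>z\<in>Z. no_justified_envy r \<rho> {indiv z} (applicants Y s (cat z) Ch)))"

lemma fair_state_empty: "fair_state r \<rho> Y s ({}, {})"
  unfolding fair_state_def by simp

lemma fair_state_admit:
  assumes "fair_state r \<rho> Y s st"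
    and new: "no_justified_envy r \<rho> S (applicants Y s v (fst st) - S)"
  shows "fair_state r \<rho> Y s (admit s v S st)"
proof -
  obtain Ch Z where st: "st = (Ch, Z)" by (cases st)
  have Ch: "Ch = indiv ` Z"
    and old: "\<forall>z\<in>Z. no_justified_envy r \<rho> {indiv z} (applicants Y s (cat z) Ch)"
    using assms(1) unfolding fair_state_def st by auto
  define N where "N = {(i, s, v) | i. i \<in> S}"
  have "indiv ` N = S" unfolding N_def by (force simp: indiv_def)
  with Ch have "Ch \<union> S = indiv ` (Z \<union> N)" by auto
  moreover have "no_justified_envy r \<rho> {indiv z} (applicants Y s (cat z) (Ch \<union> S))"
    if "z \<in> Z" for z
    using old that by (auto simp: applicants_def intro: no_justified_envy_mono)
  moreover have "no_justified_envy r \<rho> {indiv z} (applicants Y s (cat z) (Ch \<union> S))"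
    if "z \<in> N" for z
  proof -
    from that obtain j where "j \<in> S" "indiv z = j" "cat z = v"
      unfolding N_def by (auto simp: indiv_def cat_def)
    moreover have "applicants Y s v (Ch \<union> S) = applicants Y s v Ch - S"
      unfolding applicants_def by blast
    ultimately show ?thesis
      using new unfolding st by (auto intro: no_justified_envy_mono)
  qed
  ultimately show ?thesis
    unfolding fair_state_def admit_def st N_def[symmetric] by auto
qed

lemma fair_state_fold_agg_step:
  fixes r :: "'i::finite \<Rightarrow> 'i \<Rightarrow> bool"
  assumes r: "strict_ranking r" and "fair_state r \<rho> Y s st"
  shows "fair_state r \<rho> Y s (fold (agg_step r hs \<rho> cap res s Y) vs st)"
proof (rule fold_invariant[where Q = "\<lambda>_. True"])
  fix v st'
  assume "fair_state r \<rho> Y s st'"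
  moreover have "agg_step r hs \<rho> cap res s Y v st'
      = admit s v (choice_h r hs \<rho> (cap v) (res v) (applicants Y s v (fst st'))) st'"
    unfolding agg_step_def admit_def applicants_def by (simp add: Let_def split: prod.split)
  ultimately show "fair_state r \<rho> Y s (agg_step r hs \<rho> cap res s Y v st')"
    using fair_state_admit no_justified_envy_choice_h[OF r finite] by metis
qed (use assms in auto)

theorem theorem4:
  fixes better :: "'s::finite \<Rightarrow> 'i::finite \<Rightarrow> 'i \<Rightarrow> bool"
    and t :: "'i \<Rightarrow> rcat option"
    and hs :: "'h list"
    and \<rho> :: "'i \<Rightarrow> 'h set"
    and cap :: "'s \<Rightarrow> ptype \<Rightarrow> nat"
    and res :: "'s \<Rightarrow> ptype \<Rightarrow> 'h \<Rightarrow> nat"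
    and s :: 's
  assumes "\<forall>s'. strict_ranking (better s')"
    and "hierarchical hs \<rho>"
  shows "\<forall>Y \<subseteq> contracts t. \<forall>x \<in> Y. inst x = s \<longrightarrow>
           indiv x \<notin> indiv ` choice_hT better hs \<rho> cap res s Y \<longrightarrow>
           (\<forall>y \<in> choice_hT better hs \<rho> cap res s Y.
              better s (indiv y) (indiv x) \<or> cat x \<noteq> cat y \<or> \<rho> (indiv y) - \<rho> (indiv x) \<noteq> {})"
proof (intro allI impI ballI)
  fix Y x y
  assume x: "x \<in> Y" "inst x = s"
    and rejected: "indiv x \<notin> indiv ` choice_hT better hs \<rho> cap res s Y"
    and y: "y \<in> choice_hT better hs \<rho> cap res s Y"
  have r: "strict_ranking (better s)" using assms(1) by blast
  define st where "st = fold (agg_step (better s) hs \<rho> (cap s) (res s) s Y) cat_order ({}, {})"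
  define q where "q = cap s (Res OBC) - card {i. (i, s, Res OBC) \<in> snd st}"
  define final where "final = admit s Open (top_k (better s) q (applicants Y s Open (fst st))) st"
  have result: "choice_hT better hs \<rho> cap res s Y = snd final"
    unfolding choice_hT_def final_def q_def st_def admit_def applicants_def
    by (simp split: prod.split)
  have "fair_state (better s) \<rho> Y s st"
    unfolding st_def using fair_state_fold_agg_step[OF r fair_state_empty] .
  then have "fair_state (better s) \<rho> Y s final"
    unfolding final_def using fair_state_admit no_justified_envy_top_k[OF r finite] by metis
  moreover have "x = (indiv x, s, cat x)"
    using x(2) by (cases x) (simp add: indiv_def inst_def cat_def)
  ultimately have "\<rho> (indiv y) \<subseteq> \<rho> (indiv x) \<longrightarrow> better s (indiv y) (indiv x)" if "cat x = cat y"
    using x(1) rejected y that unfolding result fair_state_def no_justified_envy_def applicants_def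
    by (cases final) force
  then show "better s (indiv y) (indiv x) \<or> cat x \<noteq> cat y \<or> \<rho> (indiv y) - \<rho> (indiv x) \<noteq> {}"
    by blast
qed

end
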